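(* There exist a $\sigma$-finite measure space $(\Omega,\mathcal{F},\mu)$ and a strongly continuous semigroup $(e^{tD})_{t\ge 0}$ of positive operators on $L_2(\Omega,\mathcal{F},\mu)$, with generator $D$, such that $(1 + i\mathbb{R}) \cap \sigma(D) = \emptyset$ but $e^{2\pi} \in \sigma(e^{2\pi D})$.
   Context: $\sigma(T)$ denotes the spectrum of a (possibly unbounded) operator $T$. A semigroup is positive if each operator $e^{tD}$, $t\ge 0$, maps nonnegative functions to nonnegative functions. $1+i\mathbb{R} = \{1+iy : y \in \mathbb{R}\}$. *)

theory Defs
  imports "HOL-Analysis.Analysis"
begin

text \<open>The complex Hilbert space L2(Omega,F,mu) is represented by square-integrable
  measurable complex functions, identified up to mu-a.e. equality.\<close>

definition L2 :: "'a measure \<Rightarrow> ('a \<Rightarrow> complex) set" where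
  "L2 M = {f. f \<in> borel_measurable M \<and> integrable M (\<lambda>x. (cmod (f x))\<^sup>2)}"

definition Ltwo_norm :: "'a measure \<Rightarrow> ('a \<Rightarrow> complex) \<Rightarrow> real" where
  "Ltwo_norm M f = sqrt (\<integral>x. (cmod (f x))\<^sup>2 \<partial>M)"

definition ae_eq :: "'a measure \<Rightarrow> ('a \<Rightarrow> complex) \<Rightarrow> ('a \<Rightarrow> complex) \<Rightarrow> bool" where
  "ae_eq M f g \<longleftrightarrow> (AE x in M. f x = g x)"

definition bounded_op :: "'a measure \<Rightarrow> (('a \<Rightarrow> complex) \<Rightarrow> ('a \<Rightarrow> complex)) \<Rightarrow> bool" where
  "bounded_op M T \<longleftrightarrow>
     (\<forall>f\<in>L2 M. T f \<in> L2 M) \<and>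
     (\<forall>f\<in>L2 M. \<forall>g\<in>L2 M. ae_eq M f g \<longrightarrow> ae_eq M (T f) (T g)) \<and>
     (\<forall>f\<in>L2 M. \<forall>g\<in>L2 M. \<forall>a b :: complex.
        ae_eq M (T (\<lambda>x. a * f x + b * g x)) (\<lambda>x. a * T f x + b * T g x)) \<and>
     (\<exists>C. \<forall>f\<in>L2 M. Ltwo_norm M (T f) \<le> C * Ltwo_norm M f)"

definition positive_op :: "'a measure \<Rightarrow> (('a \<Rightarrow> complex) \<Rightarrow> ('a \<Rightarrow> complex)) \<Rightarrow> bool" where
  "positive_op M T \<longleftrightarrow>
     (\<forall>f\<in>L2 M. (AE x in M. Im (f x) = 0 \<and> Re (f x) \<ge> 0) \<longrightarrow>
                (AE x in M. Im (T f x) = 0 \<and> Re (T f x) \<ge> 0))"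

definition C0_semigroup :: "'a measure \<Rightarrow> (real \<Rightarrow> ('a \<Rightarrow> complex) \<Rightarrow> ('a \<Rightarrow> complex)) \<Rightarrow> bool" where
  "C0_semigroup M S \<longleftrightarrow>
     (\<forall>t\<ge>0. bounded_op M (S t)) \<and>
     (\<forall>f\<in>L2 M. ae_eq M (S 0 f) f) \<and>
     (\<forall>s\<ge>0. \<forall>t\<ge>0. \<forall>f\<in>L2 M. ae_eq M (S (s + t) f) (S s (S t f))) \<and>
     (\<forall>f\<in>L2 M. ((\<lambda>t. Ltwo_norm M (\<lambda>x. S t f x - f x)) \<longlongrightarrow> 0) (at_right 0))"

text \<open>The generator D of S, as a graph: D f g means f \<in> dom D and D f = g (a.e.), where
  D f = lim_{h \<rightarrow> 0+} (S h f - f)/h in L2.\<close>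

definition generator :: "'a measure \<Rightarrow> (real \<Rightarrow> ('a \<Rightarrow> complex) \<Rightarrow> ('a \<Rightarrow> complex))
    \<Rightarrow> ('a \<Rightarrow> complex) \<Rightarrow> ('a \<Rightarrow> complex) \<Rightarrow> bool" where
  "generator M S f g \<longleftrightarrow> f \<in> L2 M \<and> g \<in> L2 M \<and>
     ((\<lambda>h. Ltwo_norm M (\<lambda>x. (S h f x - f x) / complex_of_real h - g x)) \<longlongrightarrow> 0) (at_right 0)"

text \<open>Spectrum of a (possibly unbounded) operator D given by its graph: c is in the resolvent
  set iff c - D : dom D \<rightarrow> L2 has a bounded two-sided inverse R.\<close>

definition rel_spectrum :: "'a measure \<Rightarrow> (('a \<Rightarrow> complex) \<Rightarrow> ('a \<Rightarrow> complex) \<Rightarrow> bool) \<Rightarrow> complex set" where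
  "rel_spectrum M D = {c. \<not> (\<exists>R. bounded_op M R \<and>
       (\<forall>f\<in>L2 M. D (R f) (\<lambda>x. c * R f x - f x)) \<and>
       (\<forall>f g. D f g \<longrightarrow> ae_eq M (R (\<lambda>x. c * f x - g x)) f))}"

definition op_spectrum :: "'a measure \<Rightarrow> (('a \<Rightarrow> complex) \<Rightarrow> ('a \<Rightarrow> complex)) \<Rightarrow> complex set" where
  "op_spectrum M T = {c. \<not> (\<exists>R. bounded_op M R \<and>
       (\<forall>f\<in>L2 M. ae_eq M (R (\<lambda>x. c * f x - T f x)) f \<and>
                  ae_eq M (\<lambda>x. c * R f x - T (R f) x) f))}"

end

theory Submission
  imports Defs "HOL-Real_Asymp.Real_Asymp"
begin

text \<open>
  Let \<open>\<Omega>\<close> be the disjoint union of the cyclic groups \<open>\<int>/(n+4)\<close>, \<open>n \<in> \<nat>\<close>, with counting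
  measure, and on the \<open>n\<close>-th group let \<open>D = 2 - b\<^sub>n + b\<^sub>n T\<close>, where \<open>T\<close> is the cyclic shift and
  \<open>b\<^sub>n > 0\<close>. Then \<open>exp (t D) = exp (t (2 - b\<^sub>n)) \<Sum>\<^sub>k (t b\<^sub>n)\<^sup>k / k! T\<^sup>k\<close> is positive. The discrete
  Fourier transform diagonalises \<open>D\<close> blockwise, with eigenvalues \<open>\<lambda>(n,l) = 2 - b\<^sub>n + b\<^sub>n \<omega>\<^sub>n\<^sup>l\<close>,
  \<open>\<omega>\<^sub>n = exp (2\<pi>i/(n+4))\<close>: a point at positive distance from all \<open>\<lambda>(n,l)\<close> is in the resolvent
  set of \<open>D\<close>, and every limit of eigenvalues \<open>exp (t \<lambda>(n,l))\<close> is in the spectrum of \<open>exp (t D)\<close>.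

  Choose \<open>b\<^sub>n\<close> such that \<open>k\<^sub>n = b\<^sub>n sin (2\<pi>/(n+4))\<close> is an integer and \<open>k\<^sub>n tan (\<pi>/(n+4)) \<rightarrow> 1\<close>
  from above. Then \<open>\<lambda>(n,1) = 2 - k\<^sub>n tan (\<pi>/(n+4)) + i k\<^sub>n\<close> has real part tending to \<open>1\<close> from
  below and imaginary part tending to \<open>\<infinity>\<close>, while every other eigenvalue has real part \<open>2\<close> or
  a negative real part. Hence no point \<open>1 + iy\<close> is in the spectrum of \<open>D\<close>, although
  \<open>exp (2\<pi> \<lambda>(n,1)) = exp (2\<pi> (2 - k\<^sub>n tan (\<pi>/(n+4)))) \<rightarrow> exp (2\<pi>)\<close>.
\<close>

section \<open>Discrete Fourier transform\<close>

definition unit_root :: "nat \<Rightarrow> complex" where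
  "unit_root m = cis (2 * pi / m)"

definition dft :: "nat \<Rightarrow> (nat \<Rightarrow> complex) \<Rightarrow> nat \<Rightarrow> complex" where
  "dft m x l = (\<Sum>j<m. x j * cnj (unit_root m) ^ (l * j)) / sqrt m"

definition idft :: "nat \<Rightarrow> (nat \<Rightarrow> complex) \<Rightarrow> nat \<Rightarrow> complex" where
  "idft m a j = (\<Sum>l<m. a l * unit_root m ^ (l * j)) / sqrt m"

lemma dft_cong: "(\<And>j. j < m \<Longrightarrow> x j = y j) \<Longrightarrow> dft m x = dft m y"
  unfolding dft_def by (intro ext arg_cong2[where f = "(/)"] sum.cong) auto

lemma idft_cong: "(\<And>l. l < m \<Longrightarrow> a l = b l) \<Longrightarrow> idft m a = idft m b"
  unfolding idft_def by (intro ext arg_cong2[where f = "(/)"] sum.cong) auto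

lemma unit_root_power: "unit_root m ^ k = cis (2 * pi * k / m)"
  unfolding unit_root_def Complex.DeMoivre by (simp add: mult.commute)

lemma unit_root_power_eq_iff:
  assumes "0 < m" shows "unit_root m ^ a = unit_root m ^ b \<longleftrightarrow> a mod m = b mod m"
proof -
  have "unit_root m ^ k = exp (2 * of_real pi * \<i> * of_nat k / of_nat m)" for k
    unfolding unit_root_power cis_conv_exp by (simp add: mult_ac)
  thus ?thesis using complex_root_unity_eq[of m a b] assms by simp
qed

lemma cnj_unit_root_mult: "cnj (unit_root m) * unit_root m = 1"
  unfolding unit_root_def by (simp add: cis_cnj cis_mult)

lemma sum_unit_root_orthogonal:
  assumes "i < m"
  shows "(\<Sum>l<m. unit_root m ^ (l * a) * cnj (unit_root m) ^ (l * i)) =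
           (if a mod m = i then of_nat m else 0)"
proof -
  let ?w = "unit_root m"
  have m: "0 < m" using assms by simp
  define z where "z = ?w ^ a * cnj ?w ^ i"
  have "cnj ?w ^ i * ?w ^ i = 1"
    by (simp add: cnj_unit_root_mult flip: power_mult_distrib)
  hence "z * ?w ^ i = ?w ^ a" unfolding z_def by (simp add: mult.assoc)
  moreover have "?w ^ i \<noteq> 0" by (simp add: unit_root_def)
  ultimately have "z = 1 \<longleftrightarrow> ?w ^ a = ?w ^ i"
    by (metis mult_1 mult_cancel_right)
  hence z1: "z = 1 \<longleftrightarrow> a mod m = i"
    using unit_root_power_eq_iff[OF m, of a i] assms by simp
  have "?w ^ m = 1" using unit_root_power_eq_iff[OF m, of m 0] by simp
  moreover have "z ^ m = (?w ^ m) ^ a * cnj ((?w ^ m) ^ i)"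
    unfolding z_def power_mult_distrib complex_cnj_power by (simp only: mult.commute flip: power_mult)
  ultimately have "z ^ m = 1" by simp
  hence "(\<Sum>l<m. z ^ l) = (if a mod m = i then of_nat m else 0)"
    using z1 by (auto simp: geometric_sum)
  moreover have "?w ^ (l * a) * cnj ?w ^ (l * i) = z ^ l" for l
    unfolding z_def power_mult_distrib by (simp only: mult.commute[of l] power_mult)
  ultimately show ?thesis by simp
qed

lemma idft_dft_shift:
  assumes "0 < m"
  shows "idft m (\<lambda>l. unit_root m ^ (l * k) * dft m x l) j = x ((j + k) mod m)"
proof -
  let ?w = "unit_root m"
  have sq: "complex_of_real (sqrt m) * complex_of_real (sqrt m) = of_nat m"
    by (simp flip: of_real_mult)
  have "idft m (\<lambda>l. ?w ^ (l * k) * dft m x l) j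
      = (\<Sum>l<m. \<Sum>i<m. x i * (?w ^ (l * (j + k)) * cnj ?w ^ (l * i))) / of_nat m"
    unfolding idft_def dft_def sq[symmetric]
    by (simp add: sum_distrib_left sum_distrib_right sum_divide_distrib algebra_simps power_add)
  also have "\<dots> = (\<Sum>i<m. x i * (\<Sum>l<m. ?w ^ (l * (j + k)) * cnj ?w ^ (l * i))) / of_nat m"
    by (subst sum.swap) (simp add: sum_distrib_left)
  also have "\<dots> = (\<Sum>i<m. x i * (if (j + k) mod m = i then of_nat m else 0)) / of_nat m"
    by (simp add: sum_unit_root_orthogonal)
  also have "\<dots> = x ((j + k) mod m)"
    using assms by (simp add: mult.commute[of "x _"] if_distrib[of "\<lambda>c. c * _"] sum.delta' cong: if_cong)
  finally show ?thesis .
qed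

lemma idft_dft: "j < m \<Longrightarrow> idft m (dft m x) j = x j"
  using idft_dft_shift[of m 0 x j] by simp

lemma dft_idft:
  assumes "l < m" shows "dft m (idft m a) l = a l"
proof -
  let ?w = "unit_root m"
  have sq: "complex_of_real (sqrt m) * complex_of_real (sqrt m) = of_nat m"
    by (simp flip: of_real_mult)
  have "dft m (idft m a) l = (\<Sum>j<m. \<Sum>k<m. a k * (?w ^ (j * k) * cnj ?w ^ (j * l))) / of_nat m"
    unfolding idft_def dft_def sq[symmetric]
    by (simp add: sum_distrib_left sum_distrib_right sum_divide_distrib algebra_simps)
  also have "\<dots> = (\<Sum>k<m. a k * (\<Sum>j<m. ?w ^ (j * k) * cnj ?w ^ (j * l))) / of_nat m"
    by (subst sum.swap) (simp add: sum_distrib_left)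
  also have "\<dots> = (\<Sum>k<m. a k * (if k mod m = l then of_nat m else 0)) / of_nat m"
    using assms by (simp add: sum_unit_root_orthogonal)
  also have "\<dots> = a l"
    using assms by (simp add: mult.commute[of "a _"] if_distrib[of "\<lambda>c. c * _"] sum.delta' cong: if_cong)
  finally show ?thesis .
qed

lemma sum_norm_dft: "(\<Sum>l<m. (cmod (dft m x l))\<^sup>2) = (\<Sum>j<m. (cmod (x j))\<^sup>2)"
proof -
  let ?w = "unit_root m" and ?s = "complex_of_real (sqrt m)"
  have "complex_of_real (\<Sum>j<m. (cmod (x j))\<^sup>2) = (\<Sum>j<m. x j * cnj (x j))"
    by (simp only: of_real_sum complex_norm_square)
  also have "\<dots> = (\<Sum>j<m. x j * cnj (idft m (dft m x) j))"
    by (simp add: idft_dft)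
  also have "\<dots> = (\<Sum>j<m. \<Sum>l<m. cnj (dft m x l) * (x j * cnj ?w ^ (l * j)) / ?s)"
    by (simp add: idft_def sum_divide_distrib sum_distrib_left mult_ac)
  also have "\<dots> = (\<Sum>l<m. cnj (dft m x l) * dft m x l)"
    by (subst sum.swap) (simp add: dft_def sum_divide_distrib sum_distrib_left)
  also have "\<dots> = complex_of_real (\<Sum>l<m. (cmod (dft m x l))\<^sup>2)"
    by (simp only: of_real_sum complex_norm_square mult.commute[of "cnj _"])
  finally show ?thesis by (simp only: of_real_eq_iff)
qed

lemma dft_lincomb: "dft m (\<lambda>j. a * x j + b * y j) l = a * dft m x l + b * dft m y l"
  unfolding dft_def by (simp add: sum.distrib sum_distrib_left algebra_simps add_divide_distrib)

lemma idft_lincomb: "idft m (\<lambda>l. a * u l + b * v l) j = a * idft m u j + b * idft m v j"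
  unfolding idft_def by (simp add: sum.distrib sum_distrib_left algebra_simps add_divide_distrib)

section \<open>Square-integrable functions and their operators\<close>

lemma L2_lincomb:
  assumes f: "f \<in> L2 M" and g: "g \<in> L2 M"
  shows "(\<lambda>x. a * f x + b * g x) \<in> L2 M"
proof -
  have bound: "norm ((cmod (a * f x + b * g x))\<^sup>2) \<le>
      norm (2 * (cmod a)\<^sup>2 * (cmod (f x))\<^sup>2 + 2 * (cmod b)\<^sup>2 * (cmod (g x))\<^sup>2)" for x
  proof -
    have sq: "(u + v)\<^sup>2 \<le> 2 * u\<^sup>2 + 2 * v\<^sup>2" for u v :: real
      using zero_le_power2[of "u - v"] unfolding power2_diff power2_sum by linarith
    have "(cmod (a * f x + b * g x))\<^sup>2 \<le> (cmod (a * f x) + cmod (b * g x))\<^sup>2"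
      by (intro power_mono norm_triangle_ineq) auto
    also have "\<dots> \<le> 2 * (cmod (a * f x))\<^sup>2 + 2 * (cmod (b * g x))\<^sup>2"
      by (rule sq)
    also have "\<dots> = 2 * (cmod a)\<^sup>2 * (cmod (f x))\<^sup>2 + 2 * (cmod b)\<^sup>2 * (cmod (g x))\<^sup>2"
      by (simp only: norm_mult power_mult_distrib mult.assoc)
    finally show ?thesis by simp
  qed
  have [measurable]: "f \<in> borel_measurable M" "g \<in> borel_measurable M"
    and fi: "integrable M (\<lambda>x. (cmod (f x))\<^sup>2)" and gi: "integrable M (\<lambda>x. (cmod (g x))\<^sup>2)"
    using f g unfolding L2_def by simp_all
  have m: "(\<lambda>x. a * f x + b * g x) \<in> borel_measurable M"
    by measurable
  have "integrable M (\<lambda>x. 2 * (cmod a)\<^sup>2 * (cmod (f x))\<^sup>2 + 2 * (cmod b)\<^sup>2 * (cmod (g x))\<^sup>2)"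
    by (intro Bochner_Integration.integrable_add Bochner_Integration.integrable_mult_right fi gi)
  hence "integrable M (\<lambda>x. (cmod (a * f x + b * g x))\<^sup>2)"
    by (rule Bochner_Integration.integrable_bound) (measurable, intro AE_I2 bound)
  with m show ?thesis unfolding L2_def by blast
qed

lemma Ltwo_norm_scale: "Ltwo_norm M (\<lambda>x. a * f x) = cmod a * Ltwo_norm M f"
  unfolding Ltwo_norm_def by (simp add: norm_mult power_mult_distrib real_sqrt_mult)

lemma Ltwo_norm_cong_ae:
  assumes "f \<in> L2 M" "g \<in> L2 M" "ae_eq M f g"
  shows "Ltwo_norm M f = Ltwo_norm M g"
proof -
  have "(\<integral>x. (cmod (f x))\<^sup>2 \<partial>M) = (\<integral>x. (cmod (g x))\<^sup>2 \<partial>M)"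
    using assms unfolding L2_def ae_eq_def
    by (intro integral_cong_AE) (auto elim!: AE_mp)
  thus ?thesis unfolding Ltwo_norm_def by simp
qed

lemma eigenvalue_limit_in_op_spectrum:
  assumes e: "\<And>k. e k \<in> L2 M" "\<And>k. Ltwo_norm M (e k) = 1"
    and eigen: "\<And>k. T (e k) = (\<lambda>x. \<mu> k * e k x)"
    and lim: "\<mu> \<longlonglongrightarrow> c"
  shows "c \<in> op_spectrum M T"
proof (rule ccontr)
  assume "c \<notin> op_spectrum M T"
  then obtain R where R: "bounded_op M R"
    and inverse: "\<And>f. f \<in> L2 M \<Longrightarrow> ae_eq M (R (\<lambda>x. c * f x - T f x)) f"
    unfolding op_spectrum_def by blast
  obtain C where C: "\<And>f. f \<in> L2 M \<Longrightarrow> Ltwo_norm M (R f) \<le> C * Ltwo_norm M f"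
    using R unfolding bounded_op_def by blast
  have lower: "1 \<le> cmod (c - \<mu> k) * C" for k
  proof -
    have eq: "(\<lambda>x. c * e k x - T (e k) x) = (\<lambda>x. (c - \<mu> k) * e k x + 0 * e k x)"
      by (simp add: eigen algebra_simps)
    have "ae_eq M (R (\<lambda>x. (c - \<mu> k) * e k x + 0 * e k x)) (e k)"
      using inverse[OF e(1)[of k]] unfolding eq .
    moreover have "ae_eq M (R (\<lambda>x. (c - \<mu> k) * e k x + 0 * e k x)) (\<lambda>x. (c - \<mu> k) * R (e k) x + 0 * R (e k) x)"
      using R e(1) unfolding bounded_op_def by blast
    ultimately have "ae_eq M (\<lambda>x. (c - \<mu> k) * R (e k) x) (e k)"
      unfolding ae_eq_def by eventually_elim simp
    moreover have "(\<lambda>x. (c - \<mu> k) * R (e k) x + 0 * R (e k) x) \<in> L2 M"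
      using R e(1) unfolding bounded_op_def by (intro L2_lincomb) auto
    ultimately have "Ltwo_norm M (\<lambda>x. (c - \<mu> k) * R (e k) x) = Ltwo_norm M (e k)"
      using e(1) by (intro Ltwo_norm_cong_ae) auto
    hence "1 = cmod (c - \<mu> k) * Ltwo_norm M (R (e k))"
      by (simp add: Ltwo_norm_scale e(2))
    also have "\<dots> \<le> cmod (c - \<mu> k) * C"
      using C[OF e(1)] e(2) by (simp add: mult_left_mono)
    finally show ?thesis .
  qed
  have "(\<lambda>k. cmod (c - \<mu> k) * C) \<longlonglongrightarrow> cmod (c - c) * C"
    by (intro tendsto_intros lim)
  hence "\<forall>\<^sub>F k in sequentially. cmod (c - \<mu> k) * C < 1"
    by (intro order_tendstoD) auto
  then obtain k where "cmod (c - \<mu> k) * C < 1"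
    by (auto simp: eventually_sequentially)
  with lower[of k] show False by simp
qed

section \<open>Disjoint unions of cyclic groups\<close>

locale cyclic_blocks =
  fixes m :: "nat \<Rightarrow> nat"
  assumes block_size_pos: "0 < m n"
begin

text \<open>
  The measure space has to live on the reals: the element \<open>j\<close> of the \<open>n\<close>-th group
  \<open>\<int>/m n\<close> is encoded as the natural number \<open>node n j\<close>. Functions are only ever evaluated
  at nodes, so the values of \<open>fourier_inv a\<close> elsewhere are irrelevant.
\<close>

definition node :: "nat \<Rightarrow> nat \<Rightarrow> real" where
  "node n j = real (prod_encode (n, j))"

definition nodes :: "real set" where
  "nodes = (\<lambda>(n, j). node n j) ` (SIGMA n:UNIV. {..<m n})"

abbreviation M :: "real measure" where
  "M \<equiv> count_space nodes"

definition node_index :: "real \<Rightarrow> nat \<times> nat" where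
  "node_index x = prod_decode (nat \<lfloor>x\<rfloor>)"

definition fourier :: "(real \<Rightarrow> complex) \<Rightarrow> nat \<Rightarrow> nat \<Rightarrow> complex" where
  "fourier f n = dft (m n) (\<lambda>j. f (node n j))"

definition fourier_inv :: "(nat \<Rightarrow> nat \<Rightarrow> complex) \<Rightarrow> real \<Rightarrow> complex" where
  "fourier_inv a x = (case node_index x of (n, j) \<Rightarrow> idft (m n) (a n) j)"

definition energy :: "(nat \<Rightarrow> nat \<Rightarrow> complex) \<Rightarrow> nat \<Rightarrow> real" where
  "energy a n = (\<Sum>l<m n. (cmod (a n l))\<^sup>2)"

definition fourier_mult :: "(nat \<Rightarrow> nat \<Rightarrow> complex) \<Rightarrow> (real \<Rightarrow> complex) \<Rightarrow> real \<Rightarrow> complex" where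
  "fourier_mult \<phi> f = fourier_inv (\<lambda>n l. \<phi> n l * fourier f n l)"

lemma node_inject: "node n j = node n' j' \<longleftrightarrow> n = n' \<and> j = j'"
  unfolding node_def by (metis of_nat_eq_iff prod_encode_eq prod.inject)

lemma node_index_node [simp]: "node_index (node n j) = (n, j)"
  unfolding node_index_def node_def by simp

lemma fourier_inv_node [simp]: "fourier_inv a (node n j) = idft (m n) (a n) j"
  unfolding fourier_inv_def by simp

lemma bij_betw_nodes: "bij_betw (\<lambda>(n, j). node n j) (SIGMA n:UNIV. {..<m n}) nodes"
  unfolding nodes_def by (rule inj_on_imp_bij_betw) (auto simp: inj_on_def node_inject)

lemma sigma_finite_nodes: "sigma_finite_measure M"
  by (rule sigma_finite_measure_count_space_countable) (simp add: nodes_def)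

lemma AE_nodes_iff: "(AE x in M. P x) \<longleftrightarrow> (\<forall>n j. j < m n \<longrightarrow> P (node n j))"
  unfolding AE_count_space nodes_def by auto

lemma nn_integral_nodes:
  assumes "\<And>x. 0 \<le> g x"
  shows "(\<integral>\<^sup>+x. ennreal (g x) \<partial>M) = (\<Sum>n. ennreal (\<Sum>j<m n. g (node n j)))"
proof -
  let ?I = "SIGMA n:UNIV. {..<m n}"
  have "(\<integral>\<^sup>+x. ennreal (g x) \<partial>M) = (\<integral>\<^sup>+p. ennreal (g (case p of (n, j) \<Rightarrow> node n j)) \<partial>count_space ?I)"
    by (rule nn_integral_bij_count_space[OF bij_betw_nodes, symmetric])
  also have "\<dots> = (\<integral>\<^sup>+p. ennreal (g (case p of (n, j) \<Rightarrow> node n j)) * indicator ?I p \<partial>count_space UNIV)"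
    by (rule nn_integral_count_space_indicator) simp
  also have "\<dots> = (\<integral>\<^sup>+n. \<integral>\<^sup>+j. ennreal (g (node n j)) * indicator ?I (n, j) \<partial>count_space UNIV \<partial>count_space UNIV)"
    by (rule nn_integral_fst_count_space[symmetric, where f = "\<lambda>p. ennreal (g (case p of (n, j) \<Rightarrow> node n j)) * indicator ?I p", simplified])
  also have "\<dots> = (\<integral>\<^sup>+n. ennreal (\<Sum>j<m n. g (node n j)) \<partial>count_space UNIV)"
  proof (rule nn_integral_cong)
    fix n
    have "(\<integral>\<^sup>+j. ennreal (g (node n j)) * indicator ?I (n, j) \<partial>count_space UNIV)
        = (\<integral>\<^sup>+j. ennreal (g (node n j)) \<partial>count_space {..<m n})"
      by (subst nn_integral_count_space_indicator) (auto intro!: nn_integral_cong simp: indicator_def)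
    also have "\<dots> = ennreal (\<Sum>j<m n. g (node n j))"
      using assms by (simp add: nn_integral_count_space_finite sum_ennreal)
    finally show "(\<integral>\<^sup>+j. ennreal (g (node n j)) * indicator ?I (n, j) \<partial>count_space UNIV)
        = ennreal (\<Sum>j<m n. g (node n j))" .
  qed
  also have "\<dots> = (\<Sum>n. ennreal (\<Sum>j<m n. g (node n j)))"
    by (rule nn_integral_count_space_nat)
  finally show ?thesis .
qed

lemma energy_nonneg: "0 \<le> energy a n"
  unfolding energy_def by (intro sum_nonneg) auto

lemma energy_fourier: "energy (fourier f) n = (\<Sum>j<m n. (cmod (f (node n j)))\<^sup>2)"
  unfolding energy_def fourier_def by (rule sum_norm_dft)

lemma nn_integral_norm_square:
  "(\<integral>\<^sup>+x. ennreal ((cmod (f x))\<^sup>2) \<partial>M) = (\<Sum>n. ennreal (energy (fourier f) n))"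
  by (simp add: nn_integral_nodes energy_fourier)

lemma L2_iff_summable_energy: "f \<in> L2 M \<longleftrightarrow> summable (energy (fourier f))"
proof -
  have "f \<in> L2 M \<longleftrightarrow> (\<Sum>n. ennreal (energy (fourier f) n)) < \<infinity>"
    unfolding L2_def by (simp add: integrable_iff_bounded nn_integral_norm_square)
  also have "\<dots> \<longleftrightarrow> summable (energy (fourier f))"
    using summable_suminf_not_top[OF energy_nonneg] suminf_ennreal2[OF energy_nonneg]
    by (auto simp: top.not_eq_extremum)
  finally show ?thesis .
qed

lemma Ltwo_norm_eq_energy:
  assumes "f \<in> L2 M"
  shows "Ltwo_norm M f = sqrt (\<Sum>n. energy (fourier f) n)"
proof -
  have s: "summable (energy (fourier f))" using assms L2_iff_summable_energy by blast
  have "(\<integral>x. (cmod (f x))\<^sup>2 \<partial>M) = enn2real (\<integral>\<^sup>+x. ennreal ((cmod (f x))\<^sup>2) \<partial>M)"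
    by (rule integral_eq_nn_integral) auto
  also have "\<dots> = (\<Sum>n. energy (fourier f) n)"
    unfolding nn_integral_norm_square suminf_ennreal2[OF energy_nonneg s]
    using suminf_nonneg[OF s energy_nonneg] by simp
  finally show ?thesis unfolding Ltwo_norm_def by simp
qed

lemma fourier_fourier_inv: "l < m n \<Longrightarrow> fourier (fourier_inv a) n l = a n l"
  unfolding fourier_def by (simp add: dft_idft)

lemma fourier_inv_fourier: "j < m n \<Longrightarrow> fourier_inv (fourier f) (node n j) = f (node n j)"
  unfolding fourier_def by (simp add: idft_dft)

lemma fourier_lincomb:
  "fourier (\<lambda>x. a * f x + b * g x) n l = a * fourier f n l + b * fourier g n l"
  unfolding fourier_def by (rule dft_lincomb)

lemma fourier_diff: "fourier (\<lambda>x. f x - g x) n l = fourier f n l - fourier g n l"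
  using fourier_lincomb[of 1 f "-1" g] by simp

lemma fourier_scale: "fourier (\<lambda>x. c * f x) n l = c * fourier f n l"
  using fourier_lincomb[of c f 0 f] by simp

lemma fourier_divide: "fourier (\<lambda>x. f x / c) n l = fourier f n l / c"
  unfolding fourier_def dft_def by (simp add: sum_divide_distrib ac_simps)

lemma fourier_inv_lincomb:
  "fourier_inv (\<lambda>n l. a * u n l + b * v n l) x = a * fourier_inv u x + b * fourier_inv v x"
  unfolding fourier_inv_def by (simp add: idft_lincomb split: prod.split)

lemma fourier_inv_cong:
  assumes "\<And>n l. l < m n \<Longrightarrow> u n l = v n l"
  shows "fourier_inv u = fourier_inv v"
proof -
  have "idft (m n) (u n) = idft (m n) (v n)" for n
    using assms by (intro idft_cong)
  thus ?thesis unfolding fourier_inv_def by (simp add: fun_eq_iff split: prod.split)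
qed

lemma ae_eq_iff_fourier: "ae_eq M f g \<longleftrightarrow> (\<forall>n l. l < m n \<longrightarrow> fourier f n l = fourier g n l)"
proof
  assume "ae_eq M f g"
  hence "fourier f n = fourier g n" for n
    unfolding ae_eq_def AE_nodes_iff fourier_def by (intro dft_cong) auto
  thus "\<forall>n l. l < m n \<longrightarrow> fourier f n l = fourier g n l" by simp
next
  assume "\<forall>n l. l < m n \<longrightarrow> fourier f n l = fourier g n l"
  hence "fourier_inv (fourier f) = fourier_inv (fourier g)" by (intro fourier_inv_cong) auto
  thus "ae_eq M f g"
    unfolding ae_eq_def AE_nodes_iff by (metis fourier_inv_fourier)
qed

lemma norm_fourier_le_Ltwo_norm:
  assumes "f \<in> L2 M" "l < m n"
  shows "cmod (fourier f n l) \<le> Ltwo_norm M f"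
proof -
  have s: "summable (energy (fourier f))" using assms(1) L2_iff_summable_energy by blast
  have "(cmod (fourier f n l))\<^sup>2 \<le> energy (fourier f) n"
    unfolding energy_def using assms(2) by (intro member_le_sum) auto
  also have "\<dots> \<le> (\<Sum>n. energy (fourier f) n)"
    using sum_le_suminf[OF s, of "{n}"] energy_nonneg by simp
  finally show ?thesis
    unfolding Ltwo_norm_eq_energy[OF assms(1)] by (rule real_le_rsqrt)
qed

lemma energy_le_if_dominated:
  assumes "\<And>l. l < m n \<Longrightarrow> cmod (a n l) \<le> C * cmod (b n l)"
  shows "energy a n \<le> C\<^sup>2 * energy b n"
proof -
  have "energy a n \<le> (\<Sum>l<m n. (C * cmod (b n l))\<^sup>2)"
    unfolding energy_def using assms by (intro sum_mono power_mono) auto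
  thus ?thesis by (simp add: energy_def power_mult_distrib sum_distrib_left)
qed

lemma L2_if_fourier_dominated:
  assumes "u \<in> L2 M" "\<And>n l. l < m n \<Longrightarrow> cmod (fourier f n l) \<le> C * cmod (fourier u n l)"
  shows "f \<in> L2 M"
proof -
  have "summable (\<lambda>n. C\<^sup>2 * energy (fourier u) n)"
    using assms(1) by (simp add: L2_iff_summable_energy)
  hence "summable (energy (fourier f))"
    by (rule summable_comparison_test') (simp add: energy_nonneg energy_le_if_dominated assms(2))
  thus ?thesis by (simp add: L2_iff_summable_energy)
qed

lemma Ltwo_norm_le_if_fourier_dominated:
  assumes "u \<in> L2 M" "0 \<le> C" "\<And>n l. l < m n \<Longrightarrow> cmod (fourier f n l) \<le> C * cmod (fourier u n l)"
  shows "Ltwo_norm M f \<le> C * Ltwo_norm M u"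
proof -
  have f: "f \<in> L2 M" using L2_if_fourier_dominated assms(1,3) .
  have su: "summable (energy (fourier u))" and sf: "summable (energy (fourier f))"
    using assms(1) f by (simp_all add: L2_iff_summable_energy)
  have "Ltwo_norm M f \<le> sqrt (\<Sum>n. C\<^sup>2 * energy (fourier u) n)"
    unfolding Ltwo_norm_eq_energy[OF f]
    by (intro real_sqrt_le_mono suminf_le summable_mult su sf energy_le_if_dominated assms(3))
  also have "\<dots> = C * Ltwo_norm M u"
    using assms(2) by (simp add: suminf_mult[OF su] real_sqrt_mult Ltwo_norm_eq_energy[OF assms(1)])
  finally show ?thesis .
qed

lemma fourier_fourier_mult: "l < m n \<Longrightarrow> fourier (fourier_mult \<phi> f) n l = \<phi> n l * fourier f n l"
  unfolding fourier_mult_def by (rule fourier_fourier_inv)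

lemma fourier_mult_fourier_mult:
  "fourier_mult \<phi> (fourier_mult \<psi> f) = fourier_mult (\<lambda>n l. \<phi> n l * \<psi> n l) f"
  unfolding fourier_mult_def[of \<phi>] fourier_mult_def[of "\<lambda>n l. \<phi> n l * \<psi> n l"]
  by (intro fourier_inv_cong) (simp add: fourier_fourier_mult mult.assoc)

lemma fourier_mult_lincomb:
  "fourier_mult \<phi> (\<lambda>x. a * f x + b * g x) = (\<lambda>x. a * fourier_mult \<phi> f x + b * fourier_mult \<phi> g x)"
proof -
  have "(\<lambda>n l. \<phi> n l * fourier (\<lambda>x. a * f x + b * g x) n l) =
        (\<lambda>n l. a * (\<phi> n l * fourier f n l) + b * (\<phi> n l * fourier g n l))"
    by (simp add: fourier_lincomb algebra_simps)
  thus ?thesis unfolding fourier_mult_def by (intro ext) (simp only: fourier_inv_lincomb)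
qed

lemma bounded_op_fourier_mult:
  assumes bound: "\<And>n l. l < m n \<Longrightarrow> cmod (\<phi> n l) \<le> B"
  shows "bounded_op M (fourier_mult \<phi>)"
proof -
  have "0 \<le> B" using bound[of 0 0] block_size_pos[of 0] by (meson norm_ge_zero order_trans)
  have dominated: "cmod (fourier (fourier_mult \<phi> f) n l) \<le> B * cmod (fourier f n l)" if "l < m n" for f n l
    using bound[OF that] by (simp add: fourier_fourier_mult that norm_mult mult_right_mono)
  show ?thesis
    unfolding bounded_op_def
  proof (intro conjI ballI allI impI exI)
    fix f assume "f \<in> L2 M"
    thus "fourier_mult \<phi> f \<in> L2 M" by (rule L2_if_fourier_dominated) (rule dominated)
    show "Ltwo_norm M (fourier_mult \<phi> f) \<le> B * Ltwo_norm M f"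
      using \<open>f \<in> L2 M\<close> \<open>0 \<le> B\<close> by (rule Ltwo_norm_le_if_fourier_dominated) (rule dominated)
  next
    fix f g assume "ae_eq M f g"
    thus "ae_eq M (fourier_mult \<phi> f) (fourier_mult \<phi> g)"
      by (simp add: ae_eq_iff_fourier fourier_fourier_mult)
  next
    fix f g a b
    show "ae_eq M (fourier_mult \<phi> (\<lambda>x. a * f x + b * g x))
                  (\<lambda>x. a * fourier_mult \<phi> f x + b * fourier_mult \<phi> g x)"
      by (simp add: fourier_mult_lincomb ae_eq_def)
  qed
qed

lemma tendsto_Ltwo_norm_zero_if_fourier_dominated:
  assumes "F \<noteq> bot" "u \<in> L2 M"
    and dominated: "\<forall>\<^sub>F h in F. \<forall>n l. l < m n \<longrightarrow> cmod (fourier (g h) n l) \<le> C * cmod (fourier u n l)"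
    and lim: "\<And>n l. l < m n \<Longrightarrow> ((\<lambda>h. fourier (g h) n l) \<longlongrightarrow> 0) F"
  shows "((\<lambda>h. Ltwo_norm M (g h)) \<longlongrightarrow> 0) F"
proof -
  have "((\<lambda>h. \<Sum>n. energy (fourier (g h)) n) \<longlongrightarrow> (\<Sum>n. 0)) F"
  proof (rule tannerys_theorem[THEN conjunct2, THEN conjunct2])
    show "((\<lambda>h. energy (fourier (g h)) n) \<longlongrightarrow> 0) F" for n
      unfolding energy_def
      using tendsto_sum[of "{..<m n}" "\<lambda>l h. (cmod (fourier (g h) n l))\<^sup>2" "\<lambda>_. 0" F]
      by (simp add: tendsto_norm_zero lim tendsto_power_zero)
    show "summable (\<lambda>n. C\<^sup>2 * energy (fourier u) n)"
      using assms(2) by (simp add: L2_iff_summable_energy)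
    have "\<forall>\<^sub>F h in F. \<forall>n. energy (fourier (g h)) n \<le> C\<^sup>2 * energy (fourier u) n"
      using dominated by eventually_elim (simp add: energy_le_if_dominated)
    from eventually_prodI[OF eventually_True this]
    show "\<forall>\<^sub>F (n, h) in at_top \<times>\<^sub>F F. norm (energy (fourier (g h)) n) \<le> C\<^sup>2 * energy (fourier u) n"
      by (rule eventually_mono) (auto simp: energy_nonneg)
  qed fact
  hence "((\<lambda>h. sqrt (\<Sum>n. energy (fourier (g h)) n)) \<longlongrightarrow> sqrt 0) F"
    unfolding suminf_zero by (rule tendsto_real_sqrt)
  moreover have "\<forall>\<^sub>F h in F. sqrt (\<Sum>n. energy (fourier (g h)) n) = Ltwo_norm M (g h)"
    using dominated
  proof eventually_elim
    case (elim h)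
    hence "g h \<in> L2 M" by (intro L2_if_fourier_dominated[OF assms(2)]) auto
    thus ?case by (simp add: Ltwo_norm_eq_energy)
  qed
  ultimately show ?thesis by (simp add: tendsto_cong)
qed

definition fourier_mode :: "nat \<Rightarrow> nat \<Rightarrow> real \<Rightarrow> complex" where
  "fourier_mode N L = fourier_inv (\<lambda>n l. if n = N \<and> l = L then 1 else 0)"

lemma fourier_fourier_mode:
  "l < m n \<Longrightarrow> fourier (fourier_mode N L) n l = (if n = N \<and> l = L then 1 else 0)"
  unfolding fourier_mode_def by (rule fourier_fourier_inv)

lemma energy_fourier_mode:
  assumes "L < m N"
  shows "energy (fourier (fourier_mode N L)) n = (if n = N then 1 else 0)"
proof -
  have "energy (fourier (fourier_mode N L)) n = (\<Sum>l<m n. if n = N \<and> l = L then 1 else 0)"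
    unfolding energy_def by (intro sum.cong) (auto simp: fourier_fourier_mode)
  thus ?thesis using assms by (cases "n = N") simp_all
qed

lemma fourier_mode_unit:
  assumes "L < m N"
  shows "fourier_mode N L \<in> L2 M" "Ltwo_norm M (fourier_mode N L) = 1"
proof -
  have "energy (fourier (fourier_mode N L)) sums 1"
    unfolding energy_fourier_mode[OF assms] using sums_single[of N "\<lambda>_. 1::real"] by simp
  thus "fourier_mode N L \<in> L2 M" "Ltwo_norm M (fourier_mode N L) = 1"
    by (auto simp: L2_iff_summable_energy Ltwo_norm_eq_energy sums_iff)
qed

lemma fourier_mult_fourier_mode:
  assumes "L < m N"
  shows "fourier_mult \<phi> (fourier_mode N L) = (\<lambda>x. \<phi> N L * fourier_mode N L x)"
proof -
  have "fourier_mult \<phi> (fourier_mode N L) =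
          fourier_inv (\<lambda>n l. \<phi> N L * (if n = N \<and> l = L then 1 else 0) + 0 * 0)"
    unfolding fourier_mult_def by (intro fourier_inv_cong) (simp add: fourier_fourier_mode)
  thus ?thesis unfolding fourier_inv_lincomb fourier_mode_def by simp
qed

lemma symbol_limit_in_op_spectrum:
  assumes "\<And>k. l k < m (n k)" "(\<lambda>k. \<phi> (n k) (l k)) \<longlonglongrightarrow> c"
  shows "c \<in> op_spectrum M (fourier_mult \<phi>)"
  using fourier_mode_unit[OF assms(1)] fourier_mult_fourier_mode[OF assms(1)] assms(2)
  by (rule eigenvalue_limit_in_op_spectrum)

lemma fourier_mult_shift:
  "fourier_mult (\<lambda>n l. c n * unit_root (m n) ^ (l * k)) f (node n j) = c n * f (node n ((j + k) mod m n))"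
proof -
  have "fourier_mult (\<lambda>n l. c n * unit_root (m n) ^ (l * k)) f (node n j) =
          c n * idft (m n) (\<lambda>l. unit_root (m n) ^ (l * k) * fourier f n l) j"
    unfolding fourier_mult_def fourier_inv_node idft_def
    by (simp add: sum_distrib_left mult.assoc times_divide_eq_right)
  thus ?thesis unfolding fourier_def by (simp add: idft_dft_shift block_size_pos)
qed

lemma fourier_mult_sums:
  assumes "\<And>n l. (\<lambda>k. \<phi> k n l) sums \<psi> n l"
  shows "(\<lambda>k. fourier_mult (\<phi> k) f x) sums fourier_mult \<psi> f x"
  unfolding fourier_mult_def fourier_inv_def idft_def
  by (auto split: prod.split intro!: sums_divide sums_sum sums_mult2 assms)

end

section \<open>Semigroups of Fourier multipliers\<close>

lemma eventually_at_right_0_le_1: "\<forall>\<^sub>F h in at_right (0::real). 0 < h \<and> h \<le> 1"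
  by (rule eventually_at_rightI[where b = 1]) auto

lemma mult_le_max_0: "0 \<le> h \<Longrightarrow> h \<le> 1 \<Longrightarrow> h * x \<le> max 0 (x::real)"
  by (cases "0 \<le> x") (auto simp: mult_left_le_one_le mult_nonneg_nonpos le_max_iff_disj)

lemma norm_exp_minus_1_le: "cmod (exp z - 1) \<le> cmod z * exp (max 0 (Re z))"
proof -
  have "cmod (exp z - exp 0) \<le> exp (max 0 (Re z)) * cmod (z - 0)"
  proof (rule field_differentiable_bound[where f = exp and f' = exp and S = "closed_segment 0 z"])
    show "(exp has_field_derivative exp v) (at v within closed_segment 0 z)" for v
      by (rule DERIV_subset[OF DERIV_exp]) simp
    show "cmod (exp v) \<le> exp (max 0 (Re z))" if v: "v \<in> closed_segment 0 z" for v
    proof -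
      obtain u where "0 \<le> u" "u \<le> 1" "v = u *\<^sub>R z"
        using v by (auto simp: in_segment)
      hence "Re v \<le> max 0 (Re z)" using mult_le_max_0[of u "Re z"] by simp
      thus ?thesis by (simp add: norm_exp_eq_Re)
    qed
  qed simp_all
  thus ?thesis by (simp add: mult.commute)
qed

lemma norm_exp_difference_quotient_le:
  assumes h: "0 < h" "h \<le> 1" and "Re z \<le> w"
  shows "cmod ((exp (of_real h * z) - 1) / of_real h - z) \<le> (exp (max 0 w) + 1) * cmod z"
proof -
  have "max 0 (h * Re z) \<le> max 0 w"
    using mult_le_max_0[of h "Re z"] h assms(3) by linarith
  hence "exp (max 0 (Re (of_real h * z))) \<le> exp (max 0 w)" by simp
  hence "cmod (exp (of_real h * z) - 1) \<le> cmod (of_real h * z) * exp (max 0 w)"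
    using norm_exp_minus_1_le[of "of_real h * z"] by (meson mult_left_mono norm_ge_zero order_trans)
  hence "cmod ((exp (of_real h * z) - 1) / of_real h) \<le> cmod z * exp (max 0 w)"
    using h by (simp add: norm_divide norm_mult pos_divide_le_eq mult_ac)
  thus ?thesis
    using norm_triangle_ineq4[of "(exp (of_real h * z) - 1) / of_real h" z] by (simp add: algebra_simps)
qed

lemma tendsto_exp_difference_quotient:
  fixes z :: complex
  shows "((\<lambda>h. (exp (of_real h * z) - 1) / of_real h) \<longlongrightarrow> z) (at_right (0::real))"
proof -
  have "((\<lambda>h::complex. exp (h * z)) has_field_derivative z) (at 0)"
    by (auto intro!: derivative_eq_intros)
  hence "((\<lambda>h. (exp (h * z) - 1) / h) \<longlongrightarrow> z) (at 0)"
    by (simp add: has_field_derivative_iff)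
  moreover have "filterlim complex_of_real (at 0) (at_right 0)"
    unfolding filterlim_at
    by (auto intro!: tendsto_eq_intros eventually_mono[OF eventually_at_right_less])
  ultimately show ?thesis by (rule filterlim_compose)
qed

locale multiplier_semigroup = cyclic_blocks +
  fixes symbol :: "nat \<Rightarrow> nat \<Rightarrow> complex" and w :: real
  assumes Re_symbol_le: "Re (symbol n l) \<le> w"
begin

definition S :: "real \<Rightarrow> (real \<Rightarrow> complex) \<Rightarrow> real \<Rightarrow> complex" where
  "S t = fourier_mult (\<lambda>n l. exp (of_real t * symbol n l))"

lemma fourier_S: "l < m n \<Longrightarrow> fourier (S t f) n l = exp (of_real t * symbol n l) * fourier f n l"
  unfolding S_def by (rule fourier_fourier_mult)

lemma norm_exp_symbol_le:
  assumes "0 \<le> t" shows "cmod (exp (of_real t * symbol n l)) \<le> exp (t * w)"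
proof -
  have "t * Re (symbol n l) \<le> t * w"
    using assms by (intro mult_left_mono Re_symbol_le)
  thus ?thesis by (simp add: norm_exp_eq_Re)
qed

lemma bounded_op_S: "0 \<le> t \<Longrightarrow> bounded_op M (S t)"
  unfolding S_def by (rule bounded_op_fourier_mult[OF norm_exp_symbol_le])

lemma L2_S: "0 \<le> t \<Longrightarrow> f \<in> L2 M \<Longrightarrow> S t f \<in> L2 M"
  using bounded_op_S unfolding bounded_op_def by blast

lemma norm_exp_symbol_minus_1_le:
  assumes "0 \<le> t" "t \<le> 1"
  shows "cmod (exp (of_real t * symbol n l) - 1) \<le> exp (max 0 w) + 1"
proof -
  have "cmod (exp (of_real t * symbol n l) - 1) \<le> exp (t * w) + 1"
    using order_trans[OF norm_triangle_ineq4[of "exp (of_real t * symbol n l)" 1]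
                         add_right_mono[OF norm_exp_symbol_le[OF assms(1), of n l]]]
    by simp
  also have "\<dots> \<le> exp (max 0 w) + 1"
    using mult_le_max_0[OF assms] by simp
  finally show ?thesis .
qed

lemma C0_semigroup_S: "C0_semigroup M S"
  unfolding C0_semigroup_def
proof (intro conjI allI impI ballI)
  show "bounded_op M (S t)" if "0 \<le> t" for t
    using that by (rule bounded_op_S)
  show "ae_eq M (S 0 f) f" for f
    by (simp add: ae_eq_iff_fourier fourier_S)
  show "ae_eq M (S (s + t) f) (S s (S t f))" for s t f
    unfolding S_def fourier_mult_fourier_mult by (simp add: ae_eq_def distrib_right exp_add)
  fix f assume f: "f \<in> L2 M"
  let ?C = "exp (max 0 w) + 1"
  show "((\<lambda>t. Ltwo_norm M (\<lambda>x. S t f x - f x)) \<longlongrightarrow> 0) (at_right 0)"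
  proof (rule tendsto_Ltwo_norm_zero_if_fourier_dominated[OF _ f])
    show "\<forall>\<^sub>F t in at_right 0. \<forall>n l. l < m n \<longrightarrow>
            cmod (fourier (\<lambda>x. S t f x - f x) n l) \<le> ?C * cmod (fourier f n l)"
      using eventually_at_right_0_le_1
    proof (eventually_elim, intro allI impI)
      fix t :: real and n l assume t: "0 < t \<and> t \<le> 1" and "l < m n"
      hence "fourier (\<lambda>x. S t f x - f x) n l = (exp (of_real t * symbol n l) - 1) * fourier f n l"
        by (simp add: fourier_diff fourier_S algebra_simps)
      thus "cmod (fourier (\<lambda>x. S t f x - f x) n l) \<le> ?C * cmod (fourier f n l)"
        using norm_exp_symbol_minus_1_le[of t n l] t by (simp add: norm_mult mult_right_mono)
    qed
    show "((\<lambda>t. fourier (\<lambda>x. S t f x - f x) n l) \<longlongrightarrow> 0) (at_right 0)" if "l < m n" for n l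
      using that by (simp add: fourier_diff fourier_S) (auto intro!: tendsto_eq_intros)
  qed simp
qed

lemma generator_S_fourier:
  assumes gen: "generator M S f g" and l: "l < m n"
  shows "fourier g n l = symbol n l * fourier f n l"
proof -
  have f: "f \<in> L2 M" and g: "g \<in> L2 M"
    and conv: "((\<lambda>h. Ltwo_norm M (\<lambda>x. (S h f x - f x) / of_real h - g x)) \<longlongrightarrow> 0) (at_right 0)"
    using gen unfolding generator_def by auto
  define q where "q h x = (S h f x - f x) / of_real h - g x" for h x
  have fourier_q: "fourier (q h) n l =
      (exp (of_real h * symbol n l) - 1) / of_real h * fourier f n l - fourier g n l" for h
    unfolding q_def using l by (simp add: fourier_diff fourier_divide fourier_S algebra_simps)
  have qL2: "q h \<in> L2 M" if "0 < h" for h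
  proof -
    have "(\<lambda>x. 1 * S h f x + (-1) * f x) \<in> L2 M"
      using that f by (intro L2_lincomb L2_S) auto
    hence "(\<lambda>x. (1 / of_real h) * (1 * S h f x + (-1) * f x) + (-1) * g x) \<in> L2 M"
      using g by (rule L2_lincomb)
    thus ?thesis unfolding q_def by (simp add: diff_divide_distrib)
  qed
  have lim0: "((\<lambda>h. fourier (q h) n l) \<longlongrightarrow> 0) (at_right 0)"
  proof (rule tendsto_norm_zero_cancel,
         rule tendsto_sandwich[where f = "\<lambda>_. 0" and h = "\<lambda>h. Ltwo_norm M (q h)"])
    show "\<forall>\<^sub>F h in at_right 0. norm (fourier (q h) n l) \<le> Ltwo_norm M (q h)"
      using eventually_at_right_0_le_1
      by eventually_elim (use qL2 l in \<open>auto intro: norm_fourier_le_Ltwo_norm\<close>)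
    show "((\<lambda>h. Ltwo_norm M (q h)) \<longlongrightarrow> 0) (at_right 0)"
      using conv unfolding q_def .
  qed simp_all
  have "((\<lambda>h. fourier (q h) n l) \<longlongrightarrow> symbol n l * fourier f n l - fourier g n l) (at_right 0)"
    unfolding fourier_q by (intro tendsto_intros tendsto_exp_difference_quotient)
  from tendsto_unique[OF trivial_limit_at_right_real this lim0]
  show ?thesis by simp
qed

lemma generator_S_intro:
  assumes f: "f \<in> L2 M" and g: "g \<in> L2 M"
    and coeff: "\<And>n l. l < m n \<Longrightarrow> fourier g n l = symbol n l * fourier f n l"
  shows "generator M S f g"
proof -
  txt \<open>The multiplier \<open>(e\<^bsup>hz\<^esup> - 1)/h - z\<close> is \<open>O(|z|)\<close> uniformly for \<open>Re z \<le> w\<close>,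
    so the error is dominated by \<open>g\<close> itself.\<close>
  let ?\<psi> = "\<lambda>h n l. (exp (of_real h * symbol n l) - 1) / of_real h - symbol n l"
  let ?C = "exp (max 0 w) + 1"
  have fourier_q: "fourier (\<lambda>x. (S h f x - f x) / of_real h - g x) n l = ?\<psi> h n l * fourier f n l"
    if "l < m n" for h n l
    using that coeff by (simp add: fourier_diff fourier_divide fourier_S algebra_simps)
  have "((\<lambda>h. Ltwo_norm M (\<lambda>x. (S h f x - f x) / of_real h - g x)) \<longlongrightarrow> 0) (at_right 0)"
  proof (rule tendsto_Ltwo_norm_zero_if_fourier_dominated[OF _ g, where C = ?C])
    show "\<forall>\<^sub>F h in at_right 0. \<forall>n l. l < m n \<longrightarrow>
            cmod (fourier (\<lambda>x. (S h f x - f x) / of_real h - g x) n l) \<le> ?C * cmod (fourier g n l)"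
      using eventually_at_right_0_le_1
    proof (eventually_elim, intro allI impI)
      fix h :: real and n l assume h: "0 < h \<and> h \<le> 1" and l: "l < m n"
      have "cmod (?\<psi> h n l) \<le> ?C * cmod (symbol n l)"
        using h by (intro norm_exp_difference_quotient_le Re_symbol_le) auto
      hence "cmod (?\<psi> h n l) * cmod (fourier f n l) \<le> ?C * cmod (symbol n l) * cmod (fourier f n l)"
        by (rule mult_right_mono) simp
      thus "cmod (fourier (\<lambda>x. (S h f x - f x) / of_real h - g x) n l) \<le> ?C * cmod (fourier g n l)"
        using coeff l by (simp add: fourier_q norm_mult mult.assoc)
    qed
    show "((\<lambda>h. fourier (\<lambda>x. (S h f x - f x) / of_real h - g x) n l) \<longlongrightarrow> 0) (at_right 0)"
      if "l < m n" for n l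
      using tendsto_mult[OF tendsto_diff[OF tendsto_exp_difference_quotient[of "symbol n l"]
                                            tendsto_const[of "symbol n l"]]
                            tendsto_const[of "fourier f n l"]]
      by (simp add: fourier_q[OF that])
  qed simp
  with f g show ?thesis unfolding generator_def by (intro conjI)
qed

lemma generator_S_iff:
  "generator M S f g \<longleftrightarrow>
     f \<in> L2 M \<and> g \<in> L2 M \<and> (\<forall>n l. l < m n \<longrightarrow> fourier g n l = symbol n l * fourier f n l)"
  using generator_S_fourier generator_S_intro unfolding generator_def by blast

lemma not_in_rel_spectrum_if_separated:
  assumes "0 < \<delta>" and sep: "\<And>n l. l < m n \<Longrightarrow> \<delta> \<le> cmod (c - symbol n l)"
  shows "c \<notin> rel_spectrum M (generator M S)"
proof -
  have ne: "c - symbol n l \<noteq> 0" if "l < m n" for n l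
    using sep[OF that] \<open>0 < \<delta>\<close> by auto
  define R where "R = fourier_mult (\<lambda>n l. 1 / (c - symbol n l))"
  have fourier_R: "fourier (R f) n l = fourier f n l / (c - symbol n l)" if "l < m n" for f n l
    unfolding R_def using that by (simp add: fourier_fourier_mult)
  have "bounded_op M R"
    unfolding R_def
    by (rule bounded_op_fourier_mult[where B = "1 / \<delta>"])
       (use sep \<open>0 < \<delta>\<close> in \<open>auto simp: norm_divide divide_simps\<close>)
  hence RL2: "f \<in> L2 M \<Longrightarrow> R f \<in> L2 M" for f unfolding bounded_op_def by blast
  have "generator M S (R f) (\<lambda>x. c * R f x - f x)" if f: "f \<in> L2 M" for f
  proof -
    have "(\<lambda>x. c * R f x + (-1) * f x) \<in> L2 M" using RL2 f by (intro L2_lincomb)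
    moreover have "fourier (\<lambda>x. c * R f x - f x) n l = symbol n l * fourier (R f) n l" if "l < m n" for n l
      using that ne[OF that] by (simp add: fourier_diff fourier_scale fourier_R field_simps)
    ultimately show ?thesis
      using RL2 f by (simp add: generator_S_iff)
  qed
  moreover have "ae_eq M (R (\<lambda>x. c * f x - g x)) f" if "generator M S f g" for f g
    using that ne by (simp add: generator_S_iff ae_eq_iff_fourier fourier_R fourier_diff
                         fourier_scale field_simps)
  ultimately show ?thesis
    using \<open>bounded_op M R\<close> unfolding rel_spectrum_def by blast
qed

lemma S_sums_shifts:
  assumes symbol: "\<And>n l. symbol n l = of_real (a n) + of_real (b n) * unit_root (m n) ^ l"
  shows "(\<lambda>k. of_real (exp (t * a n) * (t * b n) ^ k / fact k) * f (node n ((j + k) mod m n)))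
           sums S t f (node n j)"
proof -
  define p where "p n k = exp (t * a n) * (t * b n) ^ k / fact k" for n k
  have "(\<lambda>k. of_real (p n k) * unit_root (m n) ^ (l * k)) sums exp (of_real t * symbol n l)" for n l
  proof -
    let ?w = "unit_root (m n)"
    have "(\<lambda>k. of_real (exp (t * a n)) * ((of_real (t * b n) * ?w ^ l) ^ k /\<^sub>R fact k)) sums
            (of_real (exp (t * a n)) * exp (of_real (t * b n) * ?w ^ l))"
      by (intro sums_mult exp_converges)
    moreover have "of_real (p n k) * ?w ^ (l * k) =
        of_real (exp (t * a n)) * ((of_real (t * b n) * ?w ^ l) ^ k /\<^sub>R fact k)" for k
      by (simp add: p_def scaleR_conv_of_real power_mult_distrib divide_inverse mult_ac flip: power_mult)
    moreover have "exp (of_real t * symbol n l) = of_real (exp (t * a n)) * exp (of_real (t * b n) * ?w ^ l)"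
      by (simp add: symbol distrib_left exp_add mult.assoc flip: exp_of_real)
    ultimately show ?thesis by simp
  qed
  hence "(\<lambda>k. fourier_mult (\<lambda>n l. of_real (p n k) * unit_root (m n) ^ (l * k)) f (node n j))
           sums S t f (node n j)"
    unfolding S_def by (rule fourier_mult_sums)
  thus ?thesis unfolding p_def by (simp only: fourier_mult_shift)
qed

lemma positive_op_S:
  assumes symbol: "\<And>n l. symbol n l = of_real (a n) + of_real (b n) * unit_root (m n) ^ l"
    and "\<And>n. 0 \<le> b n" and "0 \<le> t"
  shows "positive_op M (S t)"
  unfolding positive_op_def AE_nodes_iff
proof (intro ballI impI allI)
  fix f n j
  assume "\<forall>n j. j < m n \<longrightarrow> Im (f (node n j)) = 0 \<and> 0 \<le> Re (f (node n j))"
  hence f: "Im (f (node n ((j + k) mod m n))) = 0" "0 \<le> Re (f (node n ((j + k) mod m n)))" for k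
    using mod_less_divisor[OF block_size_pos] by auto
  let ?p = "\<lambda>k. exp (t * a n) * (t * b n) ^ k / fact k"
  note sums = S_sums_shifts[OF symbol, of t n f j]
  have real_mult: "Im (of_real r * z) = r * Im z" "Re (of_real r * z) = r * Re z" for r z
    by simp_all
  have "(\<lambda>k. Im (of_real (?p k) * f (node n ((j + k) mod m n)))) = (\<lambda>_. 0)"
    by (simp only: real_mult f mult_zero_right)
  hence "(\<lambda>_. 0) sums Im (S t f (node n j))"
    using sums_Im[OF sums] by simp
  hence "Im (S t f (node n j)) = 0"
    using sums_zero by (rule sums_unique2)
  moreover have "0 \<le> Re (S t f (node n j))"
  proof (rule sums_le[OF _ sums_zero sums_Re[OF sums]])
    show "0 \<le> Re (of_real (?p k) * f (node n ((j + k) mod m n)))" for k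
      unfolding real_mult using assms f by simp
  qed
  ultimately show "Im (S t f (node n j)) = 0 \<and> 0 \<le> Re (S t f (node n j))" by simp
qed

end

definition angle :: "nat \<Rightarrow> real" where
  "angle n = 2 * pi / (n + 4)"

text \<open>This is \<open>tan (angle n / 2)\<close>.\<close>

definition tan_half :: "nat \<Rightarrow> real" where
  "tan_half n = (1 - cos (angle n)) / sin (angle n)"

text \<open>An integer, so that \<open>exp (2\<pi>i freq n) = 1\<close>, with \<open>freq n * tan_half n \<rightarrow> 1\<close> from above.\<close>

definition freq :: "nat \<Rightarrow> real" where
  "freq n = of_int (\<lfloor>1 / tan_half n\<rfloor> + 1)"

definition coupling :: "nat \<Rightarrow> real" where
  "coupling n = freq n / sin (angle n)"

text \<open>The symbol of \<open>2 - b + b T\<close> on the block \<open>\<int>/(n+4)\<close>, with \<open>T\<close> the cyclic shift and \<open>b = coupling n\<close>.\<close>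

definition example_symbol :: "nat \<Rightarrow> nat \<Rightarrow> complex" where
  "example_symbol n l = of_real (2 - coupling n) + of_real (coupling n) * unit_root (n + 4) ^ l"

lemma angle_pos: "0 < angle n"
  unfolding angle_def by simp

lemma angle_le_pi_half: "angle n \<le> pi / 2"
  unfolding angle_def by (simp add: field_simps)

lemma sin_angle_pos: "0 < sin (angle n)"
  using angle_pos[of n] angle_le_pi_half[of n] pi_gt_zero by (intro sin_gt_zero) linarith+

lemma cos_angle_nonneg: "0 \<le> cos (angle n)"
  using angle_pos[of n] angle_le_pi_half[of n] pi_gt_zero by (intro cos_ge_zero) linarith+

lemma cos_angle_less_1: "cos (angle n) < 1"
  using cos_monotone_0_pi[of 0 "angle n"] angle_pos[of n] angle_le_pi_half[of n] pi_gt_zero by simp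

lemma tan_half_pos: "0 < tan_half n"
  unfolding tan_half_def using sin_angle_pos cos_angle_less_1 by simp

lemma tendsto_tan_half: "tan_half \<longlonglongrightarrow> 0"
proof -
  have "((\<lambda>n::nat. (1 - cos (2 * pi / (real n + 4))) / sin (2 * pi / (real n + 4))) \<longlongrightarrow> 0) at_top"
    by real_asymp
  thus ?thesis unfolding tan_half_def angle_def by (simp add: add.commute)
qed

lemma freq_tan_half_bounds: "1 < freq n * tan_half n" "freq n * tan_half n \<le> 1 + tan_half n"
proof -
  have "1 / tan_half n < freq n" "freq n \<le> 1 / tan_half n + 1"
    unfolding freq_def by linarith+
  thus "1 < freq n * tan_half n" "freq n * tan_half n \<le> 1 + tan_half n"
    using tan_half_pos[of n] by (simp_all add: field_simps)
qed

lemma freq_pos: "0 < freq n"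
  using freq_tan_half_bounds(1)[of n] tan_half_pos[of n] by (meson less_trans zero_less_one zero_less_mult_pos2)

lemma tendsto_freq_tan_half: "(\<lambda>n. freq n * tan_half n) \<longlonglongrightarrow> 1"
proof (rule real_tendsto_sandwich[where f = "\<lambda>_. 1" and h = "\<lambda>n. 1 + tan_half n"])
  show "\<forall>\<^sub>F n in sequentially. 1 \<le> freq n * tan_half n"
    using freq_tan_half_bounds(1) by (intro always_eventually allI less_imp_le)
  show "\<forall>\<^sub>F n in sequentially. freq n * tan_half n \<le> 1 + tan_half n"
    using freq_tan_half_bounds(2) by (intro always_eventually allI)
  show "(\<lambda>n. 1 + tan_half n) \<longlonglongrightarrow> 1"
    using tendsto_add[OF tendsto_const tendsto_tan_half, of 1] by simp
qed simp

lemma eventually_freq_ge: "\<forall>\<^sub>F n in sequentially. Y \<le> freq n"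
proof -
  have "\<forall>\<^sub>F n in sequentially. tan_half n < 1 / (\<bar>Y\<bar> + 1)"
    using order_tendstoD(2)[OF tendsto_tan_half, of "1 / (\<bar>Y\<bar> + 1)"] by simp
  thus ?thesis
  proof eventually_elim
    case (elim n)
    hence "\<bar>Y\<bar> + 1 < 1 / tan_half n" using tan_half_pos[of n] by (simp add: field_simps)
    also have "\<dots> < freq n" unfolding freq_def by linarith
    finally show ?case by linarith
  qed
qed

lemma coupling_pos: "0 < coupling n"
  unfolding coupling_def using freq_pos sin_angle_pos by simp

lemma coupling_one_minus_cos: "coupling n * (1 - cos (angle n)) = freq n * tan_half n"
  unfolding coupling_def tan_half_def by simp

lemma example_symbol_eq:
  "example_symbol n l = Complex (2 - coupling n * (1 - cos (l * angle n))) (coupling n * sin (l * angle n))"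
  unfolding example_symbol_def unit_root_power angle_def
  by (simp add: complex_eq_iff algebra_simps)

lemma Re_example_symbol_le: "Re (example_symbol n l) \<le> 2"
  using coupling_pos[of n] cos_le_one[of "l * angle n"] by (simp add: example_symbol_eq)

lemma example_symbol_0: "example_symbol n 0 = 2"
  by (simp add: example_symbol_def)

lemma example_symbol_1: "example_symbol n 1 = Complex (2 - freq n * tan_half n) (freq n)"
  using coupling_one_minus_cos[of n] sin_angle_pos[of n]
  by (simp add: example_symbol_eq coupling_def)

lemma example_symbol_last: "example_symbol n (n + 3) = Complex (2 - freq n * tan_half n) (- freq n)"
proof -
  have "real (n + 3) * angle n = 2 * pi - angle n"
    unfolding angle_def by (simp add: field_simps)
  thus ?thesis
    using coupling_one_minus_cos[of n] sin_angle_pos[of n]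
    by (simp add: example_symbol_eq coupling_def)
qed

lemma Re_example_symbol_middle:
  assumes "2 \<le> l" "l \<le> n + 2"
  shows "Re (example_symbol n l) \<le> 2 - 2 * (freq n * tan_half n)"
proof -
  have "cos (l * angle n) \<le> cos (2 * angle n)"
  proof (cases "l * angle n \<le> pi")
    case True
    thus ?thesis
      using assms angle_pos[of n] by (intro cos_monotone_0_pi_le) (auto intro: mult_right_mono)
  next
    case False
    have l: "real l * angle n = 2 * pi - real (n + 4 - l) * angle n"
      using assms unfolding angle_def by (simp add: of_nat_diff field_simps)
    have "cos (2 * angle n) \<ge> cos (real (n + 4 - l) * angle n)"
      using assms angle_pos[of n] False l by (intro cos_monotone_0_pi_le) (auto intro: mult_right_mono)
    thus ?thesis unfolding l by simp
  qed
  moreover have "1 - cos (2 * angle n) = 2 * (1 - cos (angle n)) * (1 + cos (angle n))"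
    by (simp only: cos_double_cos) (simp add: power2_eq_square algebra_simps)
  hence "2 * (1 - cos (angle n)) \<le> 1 - cos (2 * angle n)"
    using cos_angle_nonneg[of n] cos_angle_less_1[of n] by simp
  ultimately have "2 * (1 - cos (angle n)) \<le> 1 - cos (l * angle n)" by simp
  hence "coupling n * (2 * (1 - cos (angle n))) \<le> coupling n * (1 - cos (l * angle n))"
    using coupling_pos[of n] by simp
  moreover have "coupling n * (2 * (1 - cos (angle n))) = 2 * (freq n * tan_half n)"
    by (subst mult.left_commute) (simp only: coupling_one_minus_cos)
  ultimately show ?thesis by (simp add: example_symbol_eq)
qed

lemma example_symbol_cases:
  assumes "l < n + 4"
  obtains "example_symbol n l = 2"
    | "Re (example_symbol n l) \<le> 2 - 2 * (freq n * tan_half n)"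
    | "example_symbol n l = Complex (2 - freq n * tan_half n) (freq n) \<or>
       example_symbol n l = Complex (2 - freq n * tan_half n) (- freq n)"
proof -
  consider "l = 0" | "2 \<le> l \<and> l \<le> n + 2" | "l = 1 \<or> l = n + 3" using assms by arith
  thus ?thesis
  proof cases
    case 1
    thus ?thesis using that(1) by (simp add: example_symbol_0)
  next
    case 2
    thus ?thesis using that(2) Re_example_symbol_middle by blast
  next
    case 3
    thus ?thesis
      by (intro that(3)) (elim disjE; simp only: example_symbol_1 example_symbol_last simp_thms)
  qed
qed

lemma example_symbol_separated:
  "\<exists>\<delta>>0. \<forall>n l. l < n + 4 \<longrightarrow> \<delta> \<le> cmod (Complex 1 y - example_symbol n l)"
proof -
  obtain N where N: "\<And>n. N \<le> n \<Longrightarrow> \<bar>y\<bar> + 1 \<le> freq n"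
    using eventually_freq_ge[of "\<bar>y\<bar> + 1"] unfolding eventually_sequentially by blast
  define \<delta> where "\<delta> = Min (insert 1 ((\<lambda>n. freq n * tan_half n - 1) ` {..<N}))"
  have "0 < \<delta>" unfolding \<delta>_def using freq_tan_half_bounds(1) by simp
  have \<delta>_le: "\<delta> \<le> 1" "n < N \<Longrightarrow> \<delta> \<le> freq n * tan_half n - 1" for n
    unfolding \<delta>_def by (auto intro: Min_le)
  have "\<delta> \<le> cmod (Complex 1 y - example_symbol n l)" if "l < n + 4" for n l
  proof -
    let ?d = "Complex 1 y - example_symbol n l"
    from that show ?thesis
    proof (cases rule: example_symbol_cases)
      case 1
      hence "1 \<le> \<bar>Re ?d\<bar>" by simp
      thus ?thesis using \<delta>_le(1) abs_Re_le_cmod[of ?d] by linarith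
    next
      case 2
      hence "1 \<le> \<bar>Re ?d\<bar>" using freq_tan_half_bounds(1)[of n] by simp
      thus ?thesis using \<delta>_le(1) abs_Re_le_cmod[of ?d] by linarith
    next
      case 3
      hence d: "Re ?d = freq n * tan_half n - 1" "Im ?d = y - freq n \<or> Im ?d = y + freq n"
        by auto
      show ?thesis
      proof (cases "n < N")
        case True
        thus ?thesis using \<delta>_le(2) d(1) abs_Re_le_cmod[of ?d] by fastforce
      next
        case False
        hence "1 \<le> \<bar>Im ?d\<bar>" using N[of n] d(2) by auto
        thus ?thesis using \<delta>_le(1) abs_Im_le_cmod[of ?d] by linarith
      qed
    qed
  qed
  with \<open>0 < \<delta>\<close> show ?thesis by blast
qed

lemma tendsto_exp_example_symbol:
  "(\<lambda>n. exp (of_real (2 * pi) * example_symbol n 1)) \<longlonglongrightarrow> complex_of_real (exp (2 * pi))"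
proof -
  have "exp (of_real (2 * pi) * example_symbol n 1) = of_real (exp (2 * pi * (2 - freq n * tan_half n)))" for n
  proof -
    have e: "of_real (2 * pi) * example_symbol n 1 =
               of_real (2 * pi * (2 - freq n * tan_half n)) + of_real (2 * freq n * pi) * \<i>"
      unfolding example_symbol_1 by (simp add: complex_eq_iff)
    have "complex_of_real (freq n) \<in> \<int>" unfolding freq_def by simp
    hence "exp (of_real (2 * freq n * pi) * \<i>) = 1" using exp_integer_2pi by simp
    thus ?thesis unfolding e exp_add by (simp flip: exp_of_real)
  qed
  moreover have "(\<lambda>n. exp (2 * pi * (2 - freq n * tan_half n))) \<longlonglongrightarrow> exp (2 * pi * (2 - 1))"
    by (intro tendsto_intros tendsto_freq_tan_half)
  ultimately show ?thesis by (simp add: tendsto_of_real)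
qed

theorem theorem5:
  shows "\<exists>(M :: real measure) (S :: real \<Rightarrow> (real \<Rightarrow> complex) \<Rightarrow> (real \<Rightarrow> complex)).
           sigma_finite_measure M \<and>
           C0_semigroup M S \<and>
           (\<forall>t\<ge>0. positive_op M (S t)) \<and>
           (\<forall>y::real. Complex 1 y \<notin> rel_spectrum M (generator M S)) \<and>
           complex_of_real (exp (2 * pi)) \<in> op_spectrum M (S (2 * pi))"
proof -
  interpret multiplier_semigroup "\<lambda>n. n + 4" example_symbol 2
    by unfold_locales (simp_all add: Re_example_symbol_le)
  have "\<forall>t\<ge>0. positive_op M (S t)"
    using positive_op_S[OF example_symbol_def less_imp_le[OF coupling_pos]] by blast
  moreover have "Complex 1 y \<notin> rel_spectrum M (generator M S)" for y
    using example_symbol_separated[of y] not_in_rel_spectrum_if_separated by blast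
  moreover have "complex_of_real (exp (2 * pi)) \<in> op_spectrum M (S (2 * pi))"
    unfolding S_def
    by (rule symbol_limit_in_op_spectrum[where n = "\<lambda>k. k" and l = "\<lambda>_. 1"])
       (use tendsto_exp_example_symbol in simp_all)
  ultimately show ?thesis
    using sigma_finite_nodes C0_semigroup_S by blast
qed

end
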